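(* Let $\mathbb{K}$ be a field with $\mathbb{Q}\subseteq\mathbb{K}\subseteq\mathbb{C}$, and let $m,n$ be positive integers with $1\le m<n$. Suppose the complex numbers $x_1,\dots,x_n$ and $y_1,\dots,y_m$ satisfy $$f_j(x_1,\dots,x_n,y_1,\dots,y_m)=0\qquad(j=1,\dots,m)$$ for some polynomials $f_j(X_1,\dots,X_n,Y_1,\dots,Y_m)\in\mathbb{K}[X_1,\dots,X_n,Y_1,\dots,Y_m]$. If $x_1,\dots,x_n$ are algebraically independent over $\mathbb{K}$ and $$\det\Big(\frac{\partial f_j}{\partial X_i}(x_1,\dots,x_n,y_1,\dots,y_m)\Big)_{1\le i,j\le m}\neq0,$$ then $y_1,\dots,y_m$ are algebraically independent over the field $\mathbb{K}(x_{m+1},\dots,x_n)$.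
   Context: The determinant is of the $m\times m$ matrix with rows indexed by $j$ and columns indexed by $i$, both ranging over $1,\dots,m$ (only the partial derivatives with respect to $X_1,\dots,X_m$ are used). *)

theory Defs
  imports Complex_Main "HOL-Library.Poly_Mapping" "Jordan_Normal_Form.Determinant"
begin

type_synonym 'v mpoly_c = "('v \<Rightarrow>\<^sub>0 nat) \<Rightarrow>\<^sub>0 complex"

definition mpoly_eval :: "'v mpoly_c \<Rightarrow> ('v \<Rightarrow> complex) \<Rightarrow> complex" where
  "mpoly_eval p a =
     (\<Sum>mo\<in>Poly_Mapping.keys p. Poly_Mapping.lookup p mo *
        (\<Prod>v\<in>Poly_Mapping.keys mo. a v ^ Poly_Mapping.lookup mo v))"

definition mpoly_pderiv :: "'v \<Rightarrow> 'v mpoly_c \<Rightarrow> 'v mpoly_c" where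
  "mpoly_pderiv v p = Abs_poly_mapping (\<lambda>mo.
     of_nat (Poly_Mapping.lookup mo v + 1) *
     Poly_Mapping.lookup p (mo + Poly_Mapping.single v 1))"

definition coeffs_in :: "complex set \<Rightarrow> 'v mpoly_c \<Rightarrow> bool" where
  "coeffs_in L p \<longleftrightarrow> (\<forall>mo. Poly_Mapping.lookup p mo \<in> L)"

definition vars_in :: "'v set \<Rightarrow> 'v mpoly_c \<Rightarrow> bool" where
  "vars_in V p \<longleftrightarrow> (\<forall>mo\<in>Poly_Mapping.keys p. Poly_Mapping.keys mo \<subseteq> V)"

definition is_subfield :: "complex set \<Rightarrow> bool" where
  "is_subfield L \<longleftrightarrow> 0 \<in> L \<and> 1 \<in> L \<and>
     (\<forall>a\<in>L. \<forall>b\<in>L. a + b \<in> L \<and> a - b \<in> L \<and> a * b \<in> L) \<and>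
     (\<forall>a\<in>L. a \<noteq> 0 \<longrightarrow> inverse a \<in> L)"

definition field_adjoin :: "complex set \<Rightarrow> complex set \<Rightarrow> complex set" where
  "field_adjoin L S = \<Inter>{F. is_subfield F \<and> L \<union> S \<subseteq> F}"

definition alg_indep :: "complex set \<Rightarrow> nat \<Rightarrow> (nat \<Rightarrow> complex) \<Rightarrow> bool" where
  "alg_indep L k a \<longleftrightarrow>
     (\<forall>p :: nat mpoly_c. coeffs_in L p \<and> vars_in {..<k} p \<and> mpoly_eval p a = 0 \<longrightarrow> p = 0)"

end

theory Submission
  imports Defs "HOL-Computational_Algebra.Polynomial"
begin

text \<open>For each \<open>k < m\<close>, the derivation \<open>\<partial>/\<partial>x\<^sub>k\<close> of the purely transcendental extension
  \<open>K(x\<^sub>1, \<dots>, x\<^sub>n)\<close> extends to a derivation \<open>D\<^sub>k\<close> of a field containing the \<open>y\<^sub>l\<close>, since in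
  characteristic zero derivations extend along every simple extension. Each \<open>D\<^sub>k\<close> vanishes on
  \<open>L = K(x\<^bsub>m+1\<^esub>, \<dots>, x\<^sub>n)\<close>. Applying \<open>D\<^sub>k\<close> to \<open>f\<^sub>j(x, y) = 0\<close> gives \<open>J\<^sub>X + J\<^sub>Y M = 0\<close> with
  \<open>M\<^bsub>lk\<^esub> = D\<^sub>k y\<^sub>l\<close>, so \<open>M\<close> is invertible because \<open>det J\<^sub>X \<noteq> 0\<close>. Applying \<open>D\<^sub>k\<close> to a relation
  \<open>P(y) = 0\<close> over \<open>L\<close> gives \<open>(\<nabla>P)(y)\<^sup>T M = 0\<close>, hence every partial derivative of \<open>P\<close> vanishes
  at \<open>y\<close>. A nonzero relation of minimal total degree would thus have only zero partial
  derivatives, i.e. be a nonzero constant, which is absurd.\<close>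

definition is_subring :: "complex set \<Rightarrow> bool" where
  "is_subring S \<longleftrightarrow> 0 \<in> S \<and> 1 \<in> S \<and> (\<forall>a\<in>S. \<forall>b\<in>S. a + b \<in> S \<and> a - b \<in> S \<and> a * b \<in> S)"

lemma subfield_imp_subring: "is_subfield F \<Longrightarrow> is_subring F"
  by (simp add: is_subfield_def is_subring_def)

lemma subring_0: "is_subring S \<Longrightarrow> 0 \<in> S" by (simp add: is_subring_def)
lemma subring_1: "is_subring S \<Longrightarrow> 1 \<in> S" by (simp add: is_subring_def)
lemma subring_add: "is_subring S \<Longrightarrow> a \<in> S \<Longrightarrow> b \<in> S \<Longrightarrow> a + b \<in> S" by (simp add: is_subring_def)
lemma subring_diff: "is_subring S \<Longrightarrow> a \<in> S \<Longrightarrow> b \<in> S \<Longrightarrow> a - b \<in> S" by (simp add: is_subring_def)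
lemma subring_mult: "is_subring S \<Longrightarrow> a \<in> S \<Longrightarrow> b \<in> S \<Longrightarrow> a * b \<in> S" by (simp add: is_subring_def)

lemma subring_sum: "is_subring S \<Longrightarrow> (\<And>i. i \<in> A \<Longrightarrow> f i \<in> S) \<Longrightarrow> sum f A \<in> S"
  by (induction A rule: infinite_finite_induct) (auto simp: subring_0 subring_add)

lemma subring_prod: "is_subring S \<Longrightarrow> (\<And>i. i \<in> A \<Longrightarrow> f i \<in> S) \<Longrightarrow> prod f A \<in> S"
  by (induction A rule: infinite_finite_induct) (auto simp: subring_1 subring_mult)

lemma subring_power: "is_subring S \<Longrightarrow> a \<in> S \<Longrightarrow> a ^ n \<in> S"
  by (induction n) (auto simp: subring_1 subring_mult)

lemma subring_of_nat: "is_subring S \<Longrightarrow> of_nat n \<in> S"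
  by (induction n) (auto simp: subring_0 subring_1 subring_add)

lemmas subfield_0 = subring_0[OF subfield_imp_subring]
  and subfield_1 = subring_1[OF subfield_imp_subring]
  and subfield_diff = subring_diff[OF subfield_imp_subring]
  and subfield_mult = subring_mult[OF subfield_imp_subring]
  and subfield_sum = subring_sum[OF subfield_imp_subring]
  and subfield_prod = subring_prod[OF subfield_imp_subring]
  and subfield_power = subring_power[OF subfield_imp_subring]

lemma subfield_inverse: "is_subfield F \<Longrightarrow> a \<in> F \<Longrightarrow> inverse a \<in> F"
  by (cases "a = 0") (auto simp: is_subfield_def)

lemma subfield_divide: "is_subfield F \<Longrightarrow> a \<in> F \<Longrightarrow> b \<in> F \<Longrightarrow> a / b \<in> F"
  by (simp add: divide_inverse subfield_mult subfield_inverse)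

lemma subfield_field_adjoin: "is_subfield (field_adjoin L S)"
  unfolding field_adjoin_def is_subfield_def by auto

lemma field_adjoin_least: "is_subfield F \<Longrightarrow> L \<union> S \<subseteq> F \<Longrightarrow> field_adjoin L S \<subseteq> F"
  unfolding field_adjoin_def by auto

section \<open>Derivations\<close>

definition is_derivation :: "complex set \<Rightarrow> (complex \<Rightarrow> complex) \<Rightarrow> bool" where
  "is_derivation F D \<longleftrightarrow> (\<forall>a\<in>F. \<forall>b\<in>F. D (a + b) = D a + D b \<and> D (a * b) = a * D b + b * D a)"

context
  fixes F :: "complex set" and D :: "complex \<Rightarrow> complex"
  assumes F: "is_subfield F" and D: "is_derivation F D"
begin

lemma derivation_add: "a \<in> F \<Longrightarrow> b \<in> F \<Longrightarrow> D (a + b) = D a + D b"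
  using D by (simp add: is_derivation_def)

lemma derivation_mult: "a \<in> F \<Longrightarrow> b \<in> F \<Longrightarrow> D (a * b) = a * D b + b * D a"
  using D by (simp add: is_derivation_def)

lemma derivation_0: "D 0 = 0"
  using derivation_add[of 0 0] subfield_0[OF F] by simp

lemma derivation_1: "D 1 = 0"
  using derivation_mult[of 1 1] subfield_1[OF F] by simp

lemma derivation_diff: "a \<in> F \<Longrightarrow> b \<in> F \<Longrightarrow> D (a - b) = D a - D b"
  using derivation_add[of "a - b" b] subfield_diff[OF F, of a b] by simp

lemma derivation_sum: "(\<And>i. i \<in> A \<Longrightarrow> f i \<in> F) \<Longrightarrow> D (sum f A) = (\<Sum>i\<in>A. D (f i))"
  by (induction A rule: infinite_finite_induct)
    (auto simp: derivation_0 derivation_add subfield_sum[OF F])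

lemma derivation_prod:
  assumes "finite A" "\<And>i. i \<in> A \<Longrightarrow> f i \<in> F"
  shows "D (prod f A) = (\<Sum>i\<in>A. D (f i) * prod f (A - {i}))"
  using assms
proof (induction A rule: finite_induct)
  case (insert x A)
  have "D (prod f (insert x A)) = f x * D (prod f A) + prod f A * D (f x)"
    using insert by (simp add: derivation_mult subfield_prod[OF F])
  also have "\<dots> = (\<Sum>i\<in>insert x A. D (f i) * prod f (insert x A - {i}))"
  proof -
    have "(\<Sum>i\<in>A. D (f i) * prod f (insert x A - {i})) = (\<Sum>i\<in>A. f x * (D (f i) * prod f (A - {i})))"
    proof (rule sum.cong[OF refl])
      fix i assume "i \<in> A"
      then have "insert x A - {i} = insert x (A - {i})" "x \<notin> A - {i}" using insert by auto
      then show "D (f i) * prod f (insert x A - {i}) = f x * (D (f i) * prod f (A - {i}))"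
        using insert by (simp add: mult_ac)
    qed
    moreover have "insert x A - {x} = A" using insert by auto
    ultimately show ?thesis using insert by (simp add: sum_distrib_left mult_ac)
  qed
  finally show ?case .
qed (simp add: derivation_1)

lemma derivation_power: "a \<in> F \<Longrightarrow> D (a ^ Suc n) = of_nat (Suc n) * a ^ n * D a"
proof (induction n)
  case (Suc n)
  have "D (a ^ Suc (Suc n)) = D (a * a ^ Suc n)" by simp
  also have "\<dots> = a * D (a ^ Suc n) + a ^ Suc n * D a"
    using Suc.prems by (auto intro!: derivation_mult subfield_power[OF F] simp del: power_Suc)
  also have "\<dots> = of_nat (Suc (Suc n)) * a ^ Suc n * D a"
    unfolding Suc.IH[OF Suc.prems] by (simp add: algebra_simps)
  finally show ?case .
qed simp

lemma subfield_derivation_constants: "is_subfield {c \<in> F. D c = 0}"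
proof -
  have "D (inverse a) = 0" if "a \<in> F" "D a = 0" "a \<noteq> 0" for a
    using derivation_mult[of a "inverse a"] that subfield_inverse[OF F] by (simp add: derivation_1)
  then show ?thesis using F unfolding is_subfield_def
    by (auto simp: derivation_0 derivation_1 derivation_add derivation_diff derivation_mult subfield_inverse)
qed

end

section \<open>Extending a derivation to a simple extension\<close>

definition poly_over :: "complex set \<Rightarrow> complex poly \<Rightarrow> bool" where
  "poly_over S p \<longleftrightarrow> (\<forall>i. coeff p i \<in> S)"

context
  fixes S :: "complex set"
  assumes S: "is_subring S"
begin

lemma poly_over_const: "c \<in> S \<Longrightarrow> poly_over S [:c:]"
  by (auto simp: poly_over_def coeff_pCons subring_0[OF S] split: nat.split)

lemma poly_over_X: "poly_over S [:0, 1:]"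
  by (auto simp: poly_over_def coeff_pCons subring_0[OF S] subring_1[OF S] split: nat.split)

lemma poly_over_add: "poly_over S p \<Longrightarrow> poly_over S q \<Longrightarrow> poly_over S (p + q)"
  by (simp add: poly_over_def subring_add[OF S])

lemma poly_over_diff: "poly_over S p \<Longrightarrow> poly_over S q \<Longrightarrow> poly_over S (p - q)"
  by (simp add: poly_over_def subring_diff[OF S])

lemma poly_over_mult: "poly_over S p \<Longrightarrow> poly_over S q \<Longrightarrow> poly_over S (p * q)"
  by (simp add: poly_over_def coeff_mult subring_sum[OF S] subring_mult[OF S])

lemma poly_over_monom: "c \<in> S \<Longrightarrow> poly_over S (monom c d)"
  by (simp add: poly_over_def coeff_monom subring_0[OF S])

lemma poly_over_pderiv: "poly_over S p \<Longrightarrow> poly_over S (pderiv p)"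
  by (simp add: poly_over_def coeff_pderiv subring_mult[OF S] subring_add[OF S] subring_1[OF S]
      subring_of_nat[OF S])

end

text \<open>If \<open>D\<close> extends to \<open>F(\<alpha>)\<close> with \<open>D \<alpha> = \<beta>\<close>, then necessarily
  \<open>D (p(\<alpha>)) = p\<^sup>D(\<alpha>) + p'(\<alpha>) \<beta>\<close>, where \<open>p\<^sup>D\<close> applies \<open>D\<close> to the coefficients.\<close>
definition der_poly_at :: "(complex \<Rightarrow> complex) \<Rightarrow> complex \<Rightarrow> complex \<Rightarrow> complex poly \<Rightarrow> complex" where
  "der_poly_at D \<alpha> \<beta> p = poly (map_poly D p) \<alpha> + poly (pderiv p) \<alpha> * \<beta>"

definition simple_ext :: "complex set \<Rightarrow> complex \<Rightarrow> complex set" where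
  "simple_ext F \<alpha> = {poly p \<alpha> / poly q \<alpha> | p q. poly_over F p \<and> poly_over F q \<and> poly q \<alpha> \<noteq> 0}"

text \<open>The condition under which \<open>D\<close> extends to \<open>F(\<alpha>)\<close> with \<open>D \<alpha> = \<beta>\<close>
  (\<open>derivation_extend_simple_ext\<close>).\<close>
definition der_admissible :: "complex set \<Rightarrow> (complex \<Rightarrow> complex) \<Rightarrow> complex \<Rightarrow> complex \<Rightarrow> bool" where
  "der_admissible F D \<alpha> \<beta> \<longleftrightarrow> (\<forall>p. poly_over F p \<and> poly p \<alpha> = 0 \<longrightarrow> der_poly_at D \<alpha> \<beta> p = 0)"

definition der_quot :: "(complex \<Rightarrow> complex) \<Rightarrow> complex \<Rightarrow> complex \<Rightarrow> complex poly \<Rightarrow> complex poly \<Rightarrow> complex" where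
  "der_quot D \<alpha> \<beta> p q =
     (der_poly_at D \<alpha> \<beta> p * poly q \<alpha> - poly p \<alpha> * der_poly_at D \<alpha> \<beta> q) / (poly q \<alpha>)\<^sup>2"

definition ext_der :: "complex set \<Rightarrow> (complex \<Rightarrow> complex) \<Rightarrow> complex \<Rightarrow> complex \<Rightarrow> complex \<Rightarrow> complex" where
  "ext_der F D \<alpha> \<beta> z = (SOME v. \<exists>p q. poly_over F p \<and> poly_over F q \<and> poly q \<alpha> \<noteq> 0 \<and>
     z = poly p \<alpha> / poly q \<alpha> \<and> v = der_quot D \<alpha> \<beta> p q)"

lemma quotient_rule_cong:
  fixes P Q R S dP dQ dR dS :: "'a::field"
  assumes "Q \<noteq> 0" "S \<noteq> 0" "P * S = R * Q" "S * dP + P * dS = Q * dR + R * dQ"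
  shows "(dP * Q - P * dQ) / Q\<^sup>2 = (dR * S - R * dS) / S\<^sup>2"
proof -
  have "(dP * Q - P * dQ) * S\<^sup>2 - (dR * S - R * dS) * Q\<^sup>2
      = Q * S * (S * dP + P * dS - (Q * dR + R * dQ)) - dQ * S * (P * S - R * Q) + dS * Q * (R * Q - P * S)"
    by (simp add: algebra_simps power2_eq_square)
  also have "\<dots> = 0" using assms by simp
  finally show ?thesis using assms by (simp add: field_simps)
qed

lemma degree_cancel_leading_term:
  fixes p \<mu> :: "'a::field poly"
  assumes "p \<noteq> 0" "\<mu> \<noteq> 0" "degree \<mu> \<le> degree p"
  defines "r \<equiv> p - monom (lead_coeff p / lead_coeff \<mu>) (degree p - degree \<mu>) * \<mu>"
  shows "r = 0 \<or> degree r < degree p"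
proof -
  let ?c = "lead_coeff p / lead_coeff \<mu>"
  let ?m = "monom ?c (degree p - degree \<mu>) * \<mu>"
  have "?c \<noteq> 0" using assms by simp
  then have "degree ?m = degree p" "lead_coeff ?m = lead_coeff p"
    using assms by (simp add: degree_mult_eq degree_monom_eq, simp add: lead_coeff_mult degree_monom_eq)
  then have "coeff r (degree p) = 0" "degree r \<le> degree p"
    unfolding r_def by (auto intro: degree_diff_le)
  then show ?thesis
    by (metis le_neq_implies_less leading_coeff_0_iff)
qed

lemma simple_extI: "poly_over F p \<Longrightarrow> poly_over F q \<Longrightarrow> poly q \<alpha> \<noteq> 0 \<Longrightarrow> z = poly p \<alpha> / poly q \<alpha> \<Longrightarrow>
    z \<in> simple_ext F \<alpha>"
  unfolding simple_ext_def by blast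

context
  fixes F :: "complex set"
  assumes F: "is_subfield F"
begin

private lemma R: "is_subring F"
  using F by (rule subfield_imp_subring)

lemma subset_simple_ext: "F \<subseteq> simple_ext F \<alpha>"
proof
  fix c assume "c \<in> F"
  then show "c \<in> simple_ext F \<alpha>"
    by (intro simple_extI[of F "[:c:]" "[:1:]"]) (auto simp: poly_over_const[OF R] subfield_1[OF F])
qed

lemma mem_simple_ext: "\<alpha> \<in> simple_ext F \<alpha>"
  by (intro simple_extI[of F "[:0,1:]" "[:1:]"])
    (auto simp: poly_over_const[OF R] poly_over_X[OF R] subfield_1[OF F])

lemma subfield_simple_ext: "is_subfield (simple_ext F \<alpha>)"
proof -
  have 0: "0 \<in> simple_ext F \<alpha>" and 1: "1 \<in> simple_ext F \<alpha>"
    using subset_simple_ext subfield_0[OF F] subfield_1[OF F] by blast+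
  have "a + b \<in> simple_ext F \<alpha> \<and> a - b \<in> simple_ext F \<alpha> \<and> a * b \<in> simple_ext F \<alpha>"
    if "a \<in> simple_ext F \<alpha>" "b \<in> simple_ext F \<alpha>" for a b
  proof -
    from that obtain p q r s where
      a: "poly_over F p" "poly_over F q" "poly q \<alpha> \<noteq> 0" "a = poly p \<alpha> / poly q \<alpha>" and
      b: "poly_over F r" "poly_over F s" "poly s \<alpha> \<noteq> 0" "b = poly r \<alpha> / poly s \<alpha>"
      unfolding simple_ext_def by blast
    have "a + b \<in> simple_ext F \<alpha>"
      by (rule simple_extI[of F "p * s + r * q" "q * s"])
        (use a b in \<open>simp_all add: poly_over_add[OF R] poly_over_mult[OF R] add_frac_eq\<close>)
    moreover have "a - b \<in> simple_ext F \<alpha>"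
      by (rule simple_extI[of F "p * s - r * q" "q * s"])
        (use a b in \<open>simp_all add: poly_over_diff[OF R] poly_over_mult[OF R] diff_frac_eq\<close>)
    moreover have "a * b \<in> simple_ext F \<alpha>"
      by (rule simple_extI[of F "p * r" "q * s"]) (use a b in \<open>auto simp: poly_over_mult[OF R]\<close>)
    ultimately show ?thesis by blast
  qed
  moreover have "inverse a \<in> simple_ext F \<alpha>" if "a \<in> simple_ext F \<alpha>" "a \<noteq> 0" for a
  proof -
    from that obtain p q where "poly_over F p" "poly_over F q" "poly q \<alpha> \<noteq> 0" "a = poly p \<alpha> / poly q \<alpha>"
      unfolding simple_ext_def by blast
    then show ?thesis by (intro simple_extI[of F q p]) (use \<open>a \<noteq> 0\<close> in auto)
  qed
  ultimately show ?thesis using 0 1 unfolding is_subfield_def by blast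
qed

context
  fixes D :: "complex \<Rightarrow> complex"
  assumes D: "is_derivation F D"
begin

lemma map_poly_derivation_add:
  "poly_over F p \<Longrightarrow> poly_over F q \<Longrightarrow> map_poly D (p + q) = map_poly D p + map_poly D q"
  by (rule poly_eqI) (simp add: coeff_map_poly derivation_0[OF F D] derivation_add[OF F D] poly_over_def)

lemma map_poly_derivation_diff:
  "poly_over F p \<Longrightarrow> poly_over F q \<Longrightarrow> map_poly D (p - q) = map_poly D p - map_poly D q"
  by (rule poly_eqI) (simp add: coeff_map_poly derivation_0[OF F D] derivation_diff[OF F D] poly_over_def)

lemma map_poly_derivation_mult:
  assumes "poly_over F p" "poly_over F q"
  shows "map_poly D (p * q) = map_poly D p * q + p * map_poly D q"
proof (rule poly_eqI)
  fix n
  have "coeff (map_poly D (p * q)) n = D (\<Sum>i\<le>n. coeff p i * coeff q (n - i))"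
    by (simp add: coeff_map_poly derivation_0[OF F D] coeff_mult)
  also have "\<dots> = (\<Sum>i\<le>n. D (coeff p i) * coeff q (n - i) + coeff p i * D (coeff q (n - i)))"
    using assms by (simp add: derivation_sum[OF F D] derivation_mult[OF F D] subfield_mult[OF F]
        poly_over_def mult.commute add.commute)
  also have "\<dots> = coeff (map_poly D p * q + p * map_poly D q) n"
    by (simp add: coeff_mult coeff_map_poly derivation_0[OF F D] sum.distrib)
  finally show "coeff (map_poly D (p * q)) n = coeff (map_poly D p * q + p * map_poly D q) n" .
qed

lemma der_poly_at_add:
  "poly_over F p \<Longrightarrow> poly_over F q \<Longrightarrow> der_poly_at D \<alpha> \<beta> (p + q) = der_poly_at D \<alpha> \<beta> p + der_poly_at D \<alpha> \<beta> q"
  by (simp add: der_poly_at_def map_poly_derivation_add pderiv_add algebra_simps)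

lemma der_poly_at_diff:
  "poly_over F p \<Longrightarrow> poly_over F q \<Longrightarrow> der_poly_at D \<alpha> \<beta> (p - q) = der_poly_at D \<alpha> \<beta> p - der_poly_at D \<alpha> \<beta> q"
  by (simp add: der_poly_at_def map_poly_derivation_diff pderiv_diff algebra_simps)

lemma der_poly_at_mult:
  "poly_over F p \<Longrightarrow> poly_over F q \<Longrightarrow>
    der_poly_at D \<alpha> \<beta> (p * q) = poly q \<alpha> * der_poly_at D \<alpha> \<beta> p + poly p \<alpha> * der_poly_at D \<alpha> \<beta> q"
  by (simp add: der_poly_at_def map_poly_derivation_mult pderiv_mult algebra_simps)

lemma der_poly_at_const: "der_poly_at D \<alpha> \<beta> [:c:] = D c"
  by (simp add: der_poly_at_def derivation_0[OF F D] map_poly_pCons)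

lemma der_poly_at_X: "der_poly_at D \<alpha> \<beta> [:0, 1:] = \<beta>"
  by (simp add: der_poly_at_def derivation_0[OF F D] derivation_1[OF F D] pderiv_pCons map_poly_pCons)

lemma der_quot_cong:
  assumes adm: "der_admissible F D \<alpha> \<beta>"
    and p: "poly_over F p" "poly_over F q" "poly_over F r" "poly_over F s"
    and nz: "poly q \<alpha> \<noteq> 0" "poly s \<alpha> \<noteq> 0"
    and eq: "poly p \<alpha> / poly q \<alpha> = poly r \<alpha> / poly s \<alpha>"
  shows "der_quot D \<alpha> \<beta> p q = der_quot D \<alpha> \<beta> r s"
proof -
  have cross: "poly p \<alpha> * poly s \<alpha> = poly r \<alpha> * poly q \<alpha>"
    using eq nz by (simp add: field_simps)
  then have "der_poly_at D \<alpha> \<beta> (p * s - r * q) = 0"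
    using adm p unfolding der_admissible_def
    by (simp add: poly_over_diff[OF R] poly_over_mult[OF R] mult.commute)
  then have "poly s \<alpha> * der_poly_at D \<alpha> \<beta> p + poly p \<alpha> * der_poly_at D \<alpha> \<beta> s =
      poly q \<alpha> * der_poly_at D \<alpha> \<beta> r + poly r \<alpha> * der_poly_at D \<alpha> \<beta> q"
    using p by (simp add: der_poly_at_diff der_poly_at_mult poly_over_mult[OF R])
  then show ?thesis
    unfolding der_quot_def by (rule quotient_rule_cong[OF nz cross])
qed

context
  fixes \<alpha> \<beta> :: complex
  assumes adm: "der_admissible F D \<alpha> \<beta>"
begin

lemma ext_der_eq:
  assumes "poly_over F p" "poly_over F q" "poly q \<alpha> \<noteq> 0" "z = poly p \<alpha> / poly q \<alpha>"
  shows "ext_der F D \<alpha> \<beta> z = der_quot D \<alpha> \<beta> p q"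
proof -
  let ?P = "\<lambda>v. \<exists>p q. poly_over F p \<and> poly_over F q \<and> poly q \<alpha> \<noteq> 0 \<and>
    z = poly p \<alpha> / poly q \<alpha> \<and> v = der_quot D \<alpha> \<beta> p q"
  have "?P (der_quot D \<alpha> \<beta> p q)" using assms by blast
  then have "?P (ext_der F D \<alpha> \<beta> z)" unfolding ext_der_def by (rule someI)
  then show ?thesis using der_quot_cong[OF adm assms(1,2)] assms(3,4) by metis
qed

lemma is_derivation_ext_der: "is_derivation (simple_ext F \<alpha>) (ext_der F D \<alpha> \<beta>)"
  unfolding is_derivation_def
proof (intro ballI conjI)
  fix a b assume "a \<in> simple_ext F \<alpha>" "b \<in> simple_ext F \<alpha>"
  then obtain p q r s where
    a: "poly_over F p" "poly_over F q" "poly q \<alpha> \<noteq> 0" "a = poly p \<alpha> / poly q \<alpha>" and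
    b: "poly_over F r" "poly_over F s" "poly s \<alpha> \<noteq> 0" "b = poly r \<alpha> / poly s \<alpha>"
    unfolding simple_ext_def by blast
  note quot = ext_der_eq[OF a] ext_der_eq[OF b] der_quot_def
  note over = a(1-3) b(1-3) poly_over_add[OF R] poly_over_mult[OF R]
  have "ext_der F D \<alpha> \<beta> (a + b) = der_quot D \<alpha> \<beta> (p * s + r * q) (q * s)"
    unfolding a(4) b(4) by (rule ext_der_eq) (use over in \<open>simp_all add: add_frac_eq\<close>)
  also have "\<dots> = ext_der F D \<alpha> \<beta> a + ext_der F D \<alpha> \<beta> b"
    unfolding quot unfolding a(4) b(4) using over
    by (simp add: der_poly_at_add der_poly_at_mult field_simps power2_eq_square)
  finally show "ext_der F D \<alpha> \<beta> (a + b) = ext_der F D \<alpha> \<beta> a + ext_der F D \<alpha> \<beta> b" .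
  have "ext_der F D \<alpha> \<beta> (a * b) = der_quot D \<alpha> \<beta> (p * r) (q * s)"
    unfolding a(4) b(4) by (rule ext_der_eq) (use over in simp_all)
  also have "\<dots> = a * ext_der F D \<alpha> \<beta> b + b * ext_der F D \<alpha> \<beta> a"
    unfolding quot unfolding a(4) b(4) using over
    by (simp add: der_poly_at_mult field_simps power2_eq_square)
  finally show "ext_der F D \<alpha> \<beta> (a * b) = a * ext_der F D \<alpha> \<beta> b + b * ext_der F D \<alpha> \<beta> a" .
qed

lemma ext_der_base: "c \<in> F \<Longrightarrow> ext_der F D \<alpha> \<beta> c = D c"
  using ext_der_eq[of "[:c:]" "[:1:]"]
  by (simp add: poly_over_const[OF R] subfield_1[OF F] der_quot_def der_poly_at_const
      derivation_1[OF F D])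

lemma ext_der_generator: "ext_der F D \<alpha> \<beta> \<alpha> = \<beta>"
  using ext_der_eq[of "[:0, 1:]" "[:1:]"]
  by (simp add: poly_over_const[OF R] poly_over_X[OF R] subfield_1[OF F] der_quot_def
      der_poly_at_const der_poly_at_X derivation_1[OF F D])

lemma derivation_extend_simple_ext:
  "\<exists>D'. is_derivation (simple_ext F \<alpha>) D' \<and> (\<forall>c\<in>F. D' c = D c) \<and> D' \<alpha> = \<beta>"
  using is_derivation_ext_der ext_der_base ext_der_generator by blast

end

lemma der_admissible_transcendental:
  "(\<And>p. poly_over F p \<Longrightarrow> p \<noteq> 0 \<Longrightarrow> poly p \<alpha> \<noteq> 0) \<Longrightarrow> der_admissible F D \<alpha> \<beta>"
  unfolding der_admissible_def der_poly_at_def by (metis add_0 map_poly_0 mult_zero_left pderiv_0 poly_0)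

text \<open>For algebraic \<open>\<alpha>\<close> with minimal polynomial \<open>\<mu>\<close>, the admissible value is forced by
  \<open>D (\<mu>(\<alpha>)) = 0\<close>; \<open>\<mu>'(\<alpha>) \<noteq> 0\<close> because \<open>\<mu>'\<close> is a nonzero polynomial of smaller degree
  (characteristic zero).\<close>
lemma der_admissible_algebraic:
  assumes \<mu>: "poly_over F \<mu>" "\<mu> \<noteq> 0" "poly \<mu> \<alpha> = 0"
    and minimal: "\<And>q. poly_over F q \<Longrightarrow> q \<noteq> 0 \<Longrightarrow> poly q \<alpha> = 0 \<Longrightarrow> degree \<mu> \<le> degree q"
  shows "der_admissible F D \<alpha> (- poly (map_poly D \<mu>) \<alpha> / poly (pderiv \<mu>) \<alpha>)"
proof -
  define \<beta> where "\<beta> = - poly (map_poly D \<mu>) \<alpha> / poly (pderiv \<mu>) \<alpha>"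
  have "degree \<mu> \<noteq> 0"
  proof
    assume "degree \<mu> = 0"
    then have "\<mu> = [:coeff \<mu> 0:]" by (simp add: degree_0_id)
    then show False using \<mu> by (metis poly_pCons mult_zero_right add.right_neutral pCons_0_0 poly_0)
  qed
  then have "poly (pderiv \<mu>) \<alpha> \<noteq> 0"
    using minimal[of "pderiv \<mu>"] poly_over_pderiv[OF R \<mu>(1)]
    by (auto simp: pderiv_eq_0_iff degree_pderiv)
  then have der_\<mu>: "der_poly_at D \<alpha> \<beta> \<mu> = 0"
    unfolding der_poly_at_def \<beta>_def by (simp add: field_simps)
  have "der_poly_at D \<alpha> \<beta> p = 0" if "poly_over F p" "poly p \<alpha> = 0" for p
    using that
  proof (induction "degree p" arbitrary: p rule: less_induct)
    case less
    show ?case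
    proof (cases "p = 0")
      case True
      then show ?thesis by (simp add: der_poly_at_def)
    next
      case False
      then have le: "degree \<mu> \<le> degree p" using minimal less.prems by blast
      define m where "m = monom (lead_coeff p / lead_coeff \<mu>) (degree p - degree \<mu>)"
      define r where "r = p - m * \<mu>"
      have m: "poly_over F m" unfolding m_def using less.prems \<mu>
        by (intro poly_over_monom[OF R] subfield_divide[OF F]) (auto simp: poly_over_def)
      have r: "poly_over F r" "poly r \<alpha> = 0"
        unfolding r_def using m \<mu> less.prems by (simp_all add: poly_over_diff[OF R] poly_over_mult[OF R])
      have "r = 0 \<or> degree r < degree p"
        unfolding r_def m_def by (rule degree_cancel_leading_term[OF False \<mu>(2) le])
      then have "der_poly_at D \<alpha> \<beta> r = 0"
        using less.hyps r by (auto simp: der_poly_at_def)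
      moreover have "p = r + m * \<mu>" unfolding r_def by simp
      ultimately show ?thesis
        using r m \<mu> der_\<mu> by (simp add: der_poly_at_add der_poly_at_mult poly_over_mult[OF R])
    qed
  qed
  then show ?thesis unfolding der_admissible_def \<beta>_def by blast
qed

lemma der_admissible_exists: "\<exists>\<beta>. der_admissible F D \<alpha> \<beta>"
proof (cases "\<exists>p. poly_over F p \<and> p \<noteq> 0 \<and> poly p \<alpha> = 0")
  case True
  then obtain \<mu> where "poly_over F \<mu> \<and> \<mu> \<noteq> 0 \<and> poly \<mu> \<alpha> = 0"
    "\<forall>q. poly_over F q \<and> q \<noteq> 0 \<and> poly q \<alpha> = 0 \<longrightarrow> degree \<mu> \<le> degree q"
    using ex_has_least_nat[of "\<lambda>p. poly_over F p \<and> p \<noteq> 0 \<and> poly p \<alpha> = 0" _ degree] by blast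
  then show ?thesis using der_admissible_algebraic by blast
next
  case False
  then show ?thesis using der_admissible_transcendental by blast
qed

end

end

primrec adjoin_seq :: "complex set \<Rightarrow> (nat \<Rightarrow> complex) \<Rightarrow> nat \<Rightarrow> complex set" where
  "adjoin_seq F a 0 = F"
| "adjoin_seq F a (Suc i) = simple_ext (adjoin_seq F a i) (a i)"

context
  fixes F :: "complex set"
  assumes F: "is_subfield F"
begin

lemma subfield_adjoin_seq: "is_subfield (adjoin_seq F a i)"
  by (induction i) (simp_all add: F subfield_simple_ext)

lemma adjoin_seq_mono: "i \<le> j \<Longrightarrow> adjoin_seq F a i \<subseteq> adjoin_seq F a j"
  by (rule lift_Suc_mono_le[of "adjoin_seq F a"])
    (simp_all add: subset_simple_ext[OF subfield_adjoin_seq])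

lemma subset_adjoin_seq: "F \<subseteq> adjoin_seq F a i"
  using adjoin_seq_mono[of 0 i] by simp

lemma mem_adjoin_seq: "i < j \<Longrightarrow> a i \<in> adjoin_seq F a j"
  using adjoin_seq_mono[of "Suc i" j a] mem_simple_ext[OF subfield_adjoin_seq[of a i], of "a i"] by auto

lemma derivation_extend_adjoin_seq:
  assumes D: "is_derivation F D"
  shows "\<exists>D'. is_derivation (adjoin_seq F a i) D' \<and> (\<forall>c\<in>F. D' c = D c)"
proof (induction i)
  case 0
  then show ?case using D by auto
next
  case (Suc i)
  then obtain D1 where D1: "is_derivation (adjoin_seq F a i) D1" "\<forall>c\<in>F. D1 c = D c"
    by blast
  obtain \<beta> where "der_admissible (adjoin_seq F a i) D1 (a i) \<beta>"
    using der_admissible_exists[OF subfield_adjoin_seq D1(1)] by blast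
  from derivation_extend_simple_ext[OF subfield_adjoin_seq D1(1) this]
  obtain D' where "is_derivation (adjoin_seq F a (Suc i)) D'" "\<forall>c\<in>adjoin_seq F a i. D' c = D1 c"
    by auto
  then show ?case using D1(2) subset_adjoin_seq by (metis subsetD)
qed

end

section \<open>Multivariate polynomials: evaluation, partial derivatives and the chain rule\<close>

definition monomial_value :: "'v set \<Rightarrow> ('v \<Rightarrow>\<^sub>0 nat) \<Rightarrow> ('v \<Rightarrow> complex) \<Rightarrow> complex" where
  "monomial_value V mo a = (\<Prod>w\<in>V. a w ^ Poly_Mapping.lookup mo w)"

lemma monomial_value_keys:
  "finite V \<Longrightarrow> Poly_Mapping.keys mo \<subseteq> V \<Longrightarrow>
    (\<Prod>w\<in>Poly_Mapping.keys mo. a w ^ Poly_Mapping.lookup mo w) = monomial_value V mo a"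
  unfolding monomial_value_def by (rule prod.mono_neutral_left) (auto simp: in_keys_iff)

lemma mpoly_eval_superset:
  "finite S \<Longrightarrow> Poly_Mapping.keys p \<subseteq> S \<Longrightarrow>
    mpoly_eval p a = (\<Sum>mo\<in>S. Poly_Mapping.lookup p mo *
      (\<Prod>v\<in>Poly_Mapping.keys mo. a v ^ Poly_Mapping.lookup mo v))"
  unfolding mpoly_eval_def by (intro sum.mono_neutral_left) (auto simp: in_keys_iff)

lemma mpoly_eval_0 [simp]: "mpoly_eval 0 a = 0"
  by (simp add: mpoly_eval_def)

lemma mpoly_eval_add: "mpoly_eval (p + q) a = mpoly_eval p a + mpoly_eval q a"
proof -
  let ?S = "Poly_Mapping.keys p \<union> Poly_Mapping.keys q"
  have "mpoly_eval (p + q) a = (\<Sum>mo\<in>?S. Poly_Mapping.lookup (p + q) mo *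
        (\<Prod>v\<in>Poly_Mapping.keys mo. a v ^ Poly_Mapping.lookup mo v))"
    by (rule mpoly_eval_superset) (auto dest: set_mp[OF keys_add])
  also have "\<dots> = mpoly_eval p a + mpoly_eval q a"
    by (subst (1 2) mpoly_eval_superset[of ?S]) (auto simp: lookup_add algebra_simps sum.distrib)
  finally show ?thesis .
qed

lemma mpoly_eval_sum: "mpoly_eval (sum f A) a = (\<Sum>i\<in>A. mpoly_eval (f i) a)"
  by (induction A rule: infinite_finite_induct) (auto simp: mpoly_eval_add)

lemma mpoly_eval_const: "Poly_Mapping.keys p \<subseteq> {0} \<Longrightarrow> mpoly_eval p a = Poly_Mapping.lookup p 0"
  by (subst mpoly_eval_superset[of "{0}"]) auto

lemma keys_add_monomial:
  "Poly_Mapping.keys ((m1::'v \<Rightarrow>\<^sub>0 nat) + m2) = Poly_Mapping.keys m1 \<union> Poly_Mapping.keys m2"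
  by (auto simp: in_keys_iff lookup_add)

lemma add_single_diff_single: "((mo::'v \<Rightarrow>\<^sub>0 nat) + Poly_Mapping.single v d) - Poly_Mapping.single v d = mo"
  by (rule poly_mapping_eqI) (simp add: lookup_add lookup_minus)

lemma diff_single_add_single:
  "d \<le> Poly_Mapping.lookup (mo::'v \<Rightarrow>\<^sub>0 nat) v \<Longrightarrow> (mo - Poly_Mapping.single v d) + Poly_Mapping.single v d = mo"
  by (rule poly_mapping_eqI) (auto simp: lookup_add lookup_minus lookup_single when_def)

lemma keys_diff_single:
  "Poly_Mapping.keys ((mo::'v \<Rightarrow>\<^sub>0 nat) - Poly_Mapping.single v d) \<subseteq> Poly_Mapping.keys mo"
  by (auto simp: in_keys_iff lookup_minus)

lemma lookup_mpoly_pderiv: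
  "Poly_Mapping.lookup (mpoly_pderiv v p) mo =
     of_nat (Poly_Mapping.lookup mo v + 1) * Poly_Mapping.lookup p (mo + Poly_Mapping.single v 1)"
proof -
  let ?f = "\<lambda>mo. of_nat (Poly_Mapping.lookup mo v + 1) * Poly_Mapping.lookup p (mo + Poly_Mapping.single v 1)"
  have "{mo. ?f mo \<noteq> 0} \<subseteq> (\<lambda>m. m - Poly_Mapping.single v 1) ` Poly_Mapping.keys p"
  proof
    fix mo assume "mo \<in> {mo. ?f mo \<noteq> 0}"
    then have "mo + Poly_Mapping.single v 1 \<in> Poly_Mapping.keys p" by (auto simp: in_keys_iff)
    then show "mo \<in> (\<lambda>m. m - Poly_Mapping.single v 1) ` Poly_Mapping.keys p"
      by (metis add_single_diff_single image_eqI)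
  qed
  then have "finite {mo. ?f mo \<noteq> 0}"
    by (rule finite_subset) simp
  then show ?thesis unfolding mpoly_pderiv_def by simp
qed

lemma lookup_mpoly_pderiv_diff_single:
  "1 \<le> Poly_Mapping.lookup mo v \<Longrightarrow>
    Poly_Mapping.lookup (mpoly_pderiv v p) (mo - Poly_Mapping.single v 1) =
      of_nat (Poly_Mapping.lookup mo v) * Poly_Mapping.lookup p mo"
  by (simp add: lookup_mpoly_pderiv diff_single_add_single lookup_minus)

lemma keys_mpoly_pderiv:
  "Poly_Mapping.keys (mpoly_pderiv v p) \<subseteq>
     (\<lambda>m. m - Poly_Mapping.single v 1) ` (Poly_Mapping.keys p \<inter> {mo. 1 \<le> Poly_Mapping.lookup mo v})"
proof
  fix mo assume "mo \<in> Poly_Mapping.keys (mpoly_pderiv v p)"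
  then have "mo + Poly_Mapping.single v 1 \<in> Poly_Mapping.keys p \<inter> {mo. 1 \<le> Poly_Mapping.lookup mo v}"
    by (auto simp: in_keys_iff lookup_mpoly_pderiv lookup_add)
  then show "mo \<in> (\<lambda>m. m - Poly_Mapping.single v 1) ` (Poly_Mapping.keys p \<inter> {mo. 1 \<le> Poly_Mapping.lookup mo v})"
    by (metis add_single_diff_single image_eqI)
qed

lemma coeffs_in_mpoly_pderiv: "is_subring L \<Longrightarrow> coeffs_in L p \<Longrightarrow> coeffs_in L (mpoly_pderiv v p)"
  by (simp add: coeffs_in_def lookup_mpoly_pderiv subring_mult subring_add subring_1 subring_of_nat)

lemma vars_in_mpoly_pderiv:
  assumes "vars_in V p"
  shows "vars_in V (mpoly_pderiv v p)"
  unfolding vars_in_def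
proof
  fix mo assume "mo \<in> Poly_Mapping.keys (mpoly_pderiv v p)"
  then have "mo + Poly_Mapping.single v 1 \<in> Poly_Mapping.keys p"
    by (auto simp: in_keys_iff lookup_mpoly_pderiv)
  then have "Poly_Mapping.keys (mo + Poly_Mapping.single v 1) \<subseteq> V"
    using assms unfolding vars_in_def by blast
  then show "Poly_Mapping.keys mo \<subseteq> V"
    by (simp add: keys_add_monomial)
qed

lemma vars_in_mono: "vars_in V p \<Longrightarrow> V \<subseteq> W \<Longrightarrow> vars_in W p"
  unfolding vars_in_def by blast

lemma mpoly_eval_pderiv:
  fixes p :: "'v mpoly_c"
  assumes V: "finite V" "vars_in V p"
  shows "mpoly_eval (mpoly_pderiv v p) a =
    (\<Sum>mo\<in>Poly_Mapping.keys p. Poly_Mapping.lookup p mo * of_nat (Poly_Mapping.lookup mo v) *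
        monomial_value V (mo - Poly_Mapping.single v 1) a)"
proof -
  let ?h = "\<lambda>m. m - Poly_Mapping.single v 1"
  let ?A = "Poly_Mapping.keys p \<inter> {mo. 1 \<le> Poly_Mapping.lookup mo v}"
  have inj: "inj_on ?h ?A"
  proof (rule inj_onI)
    fix m m' assume "m \<in> ?A" "m' \<in> ?A" "?h m = ?h m'"
    then show "m = m'" by (metis IntD2 diff_single_add_single mem_Collect_eq)
  qed
  have keys_V: "Poly_Mapping.keys mo \<subseteq> V" if "mo \<in> ?h ` ?A" for mo
  proof -
    from that obtain m where "m \<in> Poly_Mapping.keys p" "mo = ?h m" by blast
    then show ?thesis using V(2) keys_diff_single[of m v 1] unfolding vars_in_def by blast
  qed
  have "mpoly_eval (mpoly_pderiv v p) a = (\<Sum>mo\<in>?h ` ?A. Poly_Mapping.lookup (mpoly_pderiv v p) mo *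
        (\<Prod>w\<in>Poly_Mapping.keys mo. a w ^ Poly_Mapping.lookup mo w))"
    by (rule mpoly_eval_superset) (use keys_mpoly_pderiv[of v p] in auto)
  also have "\<dots> = (\<Sum>mo\<in>?h ` ?A. Poly_Mapping.lookup (mpoly_pderiv v p) mo * monomial_value V mo a)"
    by (intro sum.cong refl) (simp add: monomial_value_keys[OF V(1) keys_V])
  also have "\<dots> = (\<Sum>mo\<in>?A. Poly_Mapping.lookup (mpoly_pderiv v p) (?h mo) * monomial_value V (?h mo) a)"
    by (subst sum.reindex[OF inj]) simp
  also have "\<dots> = (\<Sum>mo\<in>?A. Poly_Mapping.lookup p mo * of_nat (Poly_Mapping.lookup mo v) *
        monomial_value V (?h mo) a)"
  proof (intro sum.cong refl)
    fix mo assume "mo \<in> ?A"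
    then show "Poly_Mapping.lookup (mpoly_pderiv v p) (?h mo) * monomial_value V (?h mo) a =
        Poly_Mapping.lookup p mo * of_nat (Poly_Mapping.lookup mo v) * monomial_value V (?h mo) a"
      using lookup_mpoly_pderiv_diff_single[of mo v p] by simp
  qed
  also have "\<dots> = (\<Sum>mo\<in>Poly_Mapping.keys p. Poly_Mapping.lookup p mo * of_nat (Poly_Mapping.lookup mo v) *
        monomial_value V (?h mo) a)"
    by (intro sum.mono_neutral_left) auto
  finally show ?thesis .
qed

context
  fixes G :: "complex set" and D :: "complex \<Rightarrow> complex"
  assumes G: "is_subfield G" and D: "is_derivation G D"
begin

lemma derivation_monomial_value:
  assumes V: "finite V" "\<And>v. v \<in> V \<Longrightarrow> a v \<in> G"
  shows "D (monomial_value V mo a) = (\<Sum>v\<in>V. of_nat (Poly_Mapping.lookup mo v) *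
           monomial_value V (mo - Poly_Mapping.single v 1) a * D (a v))"
proof -
  have "D (monomial_value V mo a) = (\<Sum>v\<in>V. D (a v ^ Poly_Mapping.lookup mo v) *
           (\<Prod>w\<in>V - {v}. a w ^ Poly_Mapping.lookup mo w))"
    unfolding monomial_value_def
    by (rule derivation_prod[OF G D V(1)]) (simp add: subfield_power[OF G] V(2))
  also have "\<dots> = (\<Sum>v\<in>V. of_nat (Poly_Mapping.lookup mo v) *
           monomial_value V (mo - Poly_Mapping.single v 1) a * D (a v))"
  proof (intro sum.cong refl)
    fix v assume v: "v \<in> V"
    have rest: "(\<Prod>w\<in>V - {v}. a w ^ Poly_Mapping.lookup (mo - Poly_Mapping.single v 1) w) =
        (\<Prod>w\<in>V - {v}. a w ^ Poly_Mapping.lookup mo w)"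
      by (intro prod.cong refl) (auto simp: lookup_minus lookup_single)
    have m: "monomial_value V (mo - Poly_Mapping.single v 1) a =
        a v ^ (Poly_Mapping.lookup mo v - 1) * (\<Prod>w\<in>V - {v}. a w ^ Poly_Mapping.lookup mo w)"
      unfolding monomial_value_def rest[symmetric] using v V(1) by (simp add: prod.remove lookup_minus)
    show "D (a v ^ Poly_Mapping.lookup mo v) * (\<Prod>w\<in>V - {v}. a w ^ Poly_Mapping.lookup mo w) =
        of_nat (Poly_Mapping.lookup mo v) * monomial_value V (mo - Poly_Mapping.single v 1) a * D (a v)"
    proof (cases "Poly_Mapping.lookup mo v")
      case 0
      then show ?thesis by (simp add: derivation_1[OF G D])
    next
      case (Suc k)
      then show ?thesis
        unfolding m using derivation_power[OF G D V(2)[OF v], of k] by (simp add: mult_ac)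
    qed
  qed
  finally show ?thesis .
qed

lemma derivation_mpoly_eval:
  fixes p :: "'v mpoly_c"
  assumes C: "coeffs_in C p" "\<And>c. c \<in> C \<Longrightarrow> c \<in> G \<and> D c = 0"
    and V: "finite V" "vars_in V p" "\<And>v. v \<in> V \<Longrightarrow> a v \<in> G"
  shows "D (mpoly_eval p a) = (\<Sum>v\<in>V. mpoly_eval (mpoly_pderiv v p) a * D (a v))"
proof -
  have coeff: "Poly_Mapping.lookup p mo \<in> G" "D (Poly_Mapping.lookup p mo) = 0" for mo
    using C unfolding coeffs_in_def by blast+
  have mono: "monomial_value V mo a \<in> G" for mo
    unfolding monomial_value_def using V by (intro subfield_prod[OF G] subfield_power[OF G]) auto
  have "mpoly_eval p a = (\<Sum>mo\<in>Poly_Mapping.keys p. Poly_Mapping.lookup p mo * monomial_value V mo a)"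
    unfolding mpoly_eval_def using V(2)
    by (intro sum.cong refl) (simp add: monomial_value_keys[OF V(1)] vars_in_def)
  then have "D (mpoly_eval p a) =
      (\<Sum>mo\<in>Poly_Mapping.keys p. Poly_Mapping.lookup p mo * D (monomial_value V mo a))"
    using coeff mono by (simp add: derivation_sum[OF G D] derivation_mult[OF G D] subfield_mult[OF G])
  also have "\<dots> = (\<Sum>mo\<in>Poly_Mapping.keys p. \<Sum>v\<in>V. Poly_Mapping.lookup p mo *
      (of_nat (Poly_Mapping.lookup mo v) * monomial_value V (mo - Poly_Mapping.single v 1) a * D (a v)))"
    by (simp add: derivation_monomial_value[OF V(1,3)] sum_distrib_left)
  also have "\<dots> = (\<Sum>v\<in>V. \<Sum>mo\<in>Poly_Mapping.keys p. Poly_Mapping.lookup p mo *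
      of_nat (Poly_Mapping.lookup mo v) * monomial_value V (mo - Poly_Mapping.single v 1) a * D (a v))"
    by (subst sum.swap) (simp add: mult_ac)
  also have "\<dots> = (\<Sum>v\<in>V. mpoly_eval (mpoly_pderiv v p) a * D (a v))"
    by (simp add: mpoly_eval_pderiv[OF V(1,2)] sum_distrib_right)
  finally show ?thesis .
qed

end

section \<open>Relations whose partial derivatives are again relations\<close>

definition monomial_degree :: "('v \<Rightarrow>\<^sub>0 nat) \<Rightarrow> nat" where
  "monomial_degree mo = sum (Poly_Mapping.lookup mo) (Poly_Mapping.keys mo)"

definition total_degree :: "'v mpoly_c \<Rightarrow> nat" where
  "total_degree p = Max (insert 0 (monomial_degree ` Poly_Mapping.keys p))"

lemma monomial_degree_superset:
  "finite S \<Longrightarrow> Poly_Mapping.keys mo \<subseteq> S \<Longrightarrow> monomial_degree mo = sum (Poly_Mapping.lookup mo) S"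
  unfolding monomial_degree_def by (rule sum.mono_neutral_left) (auto simp: in_keys_iff)

lemma monomial_degree_add_single: "monomial_degree (mo + Poly_Mapping.single v 1) = monomial_degree mo + 1"
proof -
  let ?S = "insert v (Poly_Mapping.keys mo)"
  have "monomial_degree (mo + Poly_Mapping.single v 1) =
      sum (Poly_Mapping.lookup mo) ?S + sum (Poly_Mapping.lookup (Poly_Mapping.single v 1)) ?S"
    by (subst monomial_degree_superset[of ?S]) (auto simp: keys_add_monomial lookup_add sum.distrib)
  also have "sum (Poly_Mapping.lookup (Poly_Mapping.single v (1::nat))) ?S = 1"
    by (simp add: lookup_single when_def)
  also have "sum (Poly_Mapping.lookup mo) ?S = monomial_degree mo"
    by (rule monomial_degree_superset[symmetric]) auto
  finally show ?thesis .
qed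

lemma total_degree_mpoly_pderiv_less:
  assumes "mpoly_pderiv v p \<noteq> 0"
  shows "total_degree (mpoly_pderiv v p) < total_degree p"
proof -
  have less: "monomial_degree mo < total_degree p" if "mo \<in> Poly_Mapping.keys (mpoly_pderiv v p)" for mo
  proof -
    have "mo + Poly_Mapping.single v 1 \<in> Poly_Mapping.keys p"
      using that by (auto simp: in_keys_iff lookup_mpoly_pderiv)
    then have "monomial_degree (mo + Poly_Mapping.single v 1) \<le> total_degree p"
      unfolding total_degree_def by (intro Max_ge) auto
    then show ?thesis using monomial_degree_add_single[of mo v] by linarith
  qed
  obtain mo where "mo \<in> Poly_Mapping.keys (mpoly_pderiv v p)"
    using assms by (metis ex_in_conv keys_eq_empty)
  then have "0 < total_degree p" using less by fastforce
  then show ?thesis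
    unfolding total_degree_def[of "mpoly_pderiv v p"] using less by (subst Max_less_iff) auto
qed

lemma mpoly_eq_0_if_pderivs_eq_0:
  assumes "vars_in V p" "\<And>v. v \<in> V \<Longrightarrow> mpoly_pderiv v p = 0" "mpoly_eval p a = 0"
  shows "p = 0"
proof -
  have keys: "mo = 0" if mo: "mo \<in> Poly_Mapping.keys p" for mo
  proof (rule ccontr)
    assume "mo \<noteq> 0"
    then obtain v where v: "v \<in> Poly_Mapping.keys mo"
      using keys_eq_empty[of mo] by blast
    have "Poly_Mapping.keys mo \<subseteq> V" using assms(1) mo unfolding vars_in_def by blast
    with v have "mpoly_pderiv v p = 0" using assms(2) by blast
    moreover have "Poly_Mapping.lookup (mpoly_pderiv v p) (mo - Poly_Mapping.single v 1) =
        of_nat (Poly_Mapping.lookup mo v) * Poly_Mapping.lookup p mo"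
      using v by (intro lookup_mpoly_pderiv_diff_single) (simp add: in_keys_iff)
    moreover have "\<dots> \<noteq> 0" using v mo by (simp add: in_keys_iff)
    ultimately show False by simp
  qed
  then have "Poly_Mapping.lookup p 0 = 0"
    using assms(3) by (simp add: mpoly_eval_const subset_iff)
  show "p = 0"
  proof (rule poly_mapping_eqI)
    fix mo
    show "Poly_Mapping.lookup p mo = Poly_Mapping.lookup 0 mo"
      using keys[of mo] \<open>Poly_Mapping.lookup p 0 = 0\<close> by (cases "mo = 0") (auto simp: in_keys_iff)
  qed
qed

text \<open>Characteristic zero enters here: differentiating a relation of minimal total degree
  gives relations of smaller degree, which must therefore vanish identically.\<close>
lemma alg_indep_if_pderivs_vanish:
  assumes L: "is_subfield L"
    and closed: "\<And>p l. coeffs_in L p \<Longrightarrow> vars_in {..<m} p \<Longrightarrow> mpoly_eval p y = 0 \<Longrightarrow> l < m \<Longrightarrow>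
      mpoly_eval (mpoly_pderiv l p) y = 0"
  shows "alg_indep L m y"
  unfolding alg_indep_def
proof (rule ccontr)
  let ?rel = "\<lambda>p. coeffs_in L p \<and> vars_in {..<m} p \<and> mpoly_eval p y = 0 \<and> p \<noteq> 0"
  assume "\<not> (\<forall>p. coeffs_in L p \<and> vars_in {..<m} p \<and> mpoly_eval p y = 0 \<longrightarrow> p = 0)"
  then obtain P0 where "?rel P0" by blast
  from ex_has_least_nat[of ?rel, OF this, of total_degree]
  obtain P where P: "?rel P" and minimal: "\<And>q. ?rel q \<Longrightarrow> total_degree P \<le> total_degree q"
    by blast
  have "mpoly_pderiv l P = 0" if "l \<in> {..<m}" for l
  proof (rule ccontr)
    assume nz: "mpoly_pderiv l P \<noteq> 0"
    have "?rel (mpoly_pderiv l P)"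
      using P that nz
      by (simp add: closed coeffs_in_mpoly_pderiv[OF subfield_imp_subring[OF L]] vars_in_mpoly_pderiv)
    then show False
      using minimal total_degree_mpoly_pderiv_less[OF nz] by (meson not_le)
  qed
  then have "P = 0" using P by (intro mpoly_eq_0_if_pderivs_eq_0[of "{..<m}" P y]) simp_all
  with P show False by simp
qed

section \<open>Transcendence of the coordinates and derivations \<open>\<partial>/\<partial>x\<^sub>k\<close>\<close>

definition times_var_power :: "'v \<Rightarrow> nat \<Rightarrow> 'v mpoly_c \<Rightarrow> 'v mpoly_c" where
  "times_var_power i d q = Abs_poly_mapping (\<lambda>mo. if d \<le> Poly_Mapping.lookup mo i
      then Poly_Mapping.lookup q (mo - Poly_Mapping.single i d) else 0)"

lemma lookup_times_var_power:
  "Poly_Mapping.lookup (times_var_power i d q) mo =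
    (if d \<le> Poly_Mapping.lookup mo i then Poly_Mapping.lookup q (mo - Poly_Mapping.single i d) else 0)"
proof -
  let ?f = "\<lambda>mo. if d \<le> Poly_Mapping.lookup mo i then Poly_Mapping.lookup q (mo - Poly_Mapping.single i d) else 0"
  have "{mo. ?f mo \<noteq> 0} \<subseteq> (\<lambda>m. m + Poly_Mapping.single i d) ` Poly_Mapping.keys q"
  proof
    fix mo assume "mo \<in> {mo. ?f mo \<noteq> 0}"
    then have "d \<le> Poly_Mapping.lookup mo i" "mo - Poly_Mapping.single i d \<in> Poly_Mapping.keys q"
      by (auto simp: in_keys_iff split: if_splits)
    then show "mo \<in> (\<lambda>m. m + Poly_Mapping.single i d) ` Poly_Mapping.keys q"
      by (metis diff_single_add_single image_eqI)
  qed
  then have "finite {mo. ?f mo \<noteq> 0}"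
    by (rule finite_subset) simp
  then show ?thesis unfolding times_var_power_def by simp
qed

lemma keys_times_var_power:
  "Poly_Mapping.keys (times_var_power i d q) = (\<lambda>m. m + Poly_Mapping.single i d) ` Poly_Mapping.keys q"
proof
  show "Poly_Mapping.keys (times_var_power i d q) \<subseteq> (\<lambda>m. m + Poly_Mapping.single i d) ` Poly_Mapping.keys q"
  proof
    fix mo assume "mo \<in> Poly_Mapping.keys (times_var_power i d q)"
    then have "d \<le> Poly_Mapping.lookup mo i" "mo - Poly_Mapping.single i d \<in> Poly_Mapping.keys q"
      by (auto simp: in_keys_iff lookup_times_var_power split: if_splits)
    then show "mo \<in> (\<lambda>m. m + Poly_Mapping.single i d) ` Poly_Mapping.keys q"
      by (metis diff_single_add_single image_eqI)
  qed
  show "(\<lambda>m. m + Poly_Mapping.single i d) ` Poly_Mapping.keys q \<subseteq> Poly_Mapping.keys (times_var_power i d q)"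
    by (auto simp: in_keys_iff lookup_times_var_power lookup_add add_single_diff_single)
qed

lemma monomial_eval_add_single:
  fixes a :: "'v \<Rightarrow> complex"
  assumes "i \<notin> Poly_Mapping.keys m"
  shows "(\<Prod>w\<in>Poly_Mapping.keys (m + Poly_Mapping.single i d). a w ^ Poly_Mapping.lookup (m + Poly_Mapping.single i d) w)
     = (\<Prod>w\<in>Poly_Mapping.keys m. a w ^ Poly_Mapping.lookup m w) * a i ^ d"
proof -
  let ?V = "insert i (Poly_Mapping.keys m)"
  have "(\<Prod>w\<in>Poly_Mapping.keys (m + Poly_Mapping.single i d). a w ^ Poly_Mapping.lookup (m + Poly_Mapping.single i d) w)
      = monomial_value ?V m a * (\<Prod>w\<in>?V. a w ^ Poly_Mapping.lookup (Poly_Mapping.single i d) w)"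
    by (subst monomial_value_keys[of ?V]) 
      (auto simp: keys_add_monomial monomial_value_def lookup_add power_add prod.distrib)
  also have "(\<Prod>w\<in>?V. a w ^ Poly_Mapping.lookup (Poly_Mapping.single i d) w) = a i ^ d"
    using assms by (simp add: lookup_single when_def prod.neutral)
  also have "monomial_value ?V m a = (\<Prod>w\<in>Poly_Mapping.keys m. a w ^ Poly_Mapping.lookup m w)"
    by (rule monomial_value_keys[symmetric]) auto
  finally show ?thesis .
qed

lemma mpoly_eval_times_var_power:
  assumes "\<And>m. m \<in> Poly_Mapping.keys q \<Longrightarrow> i \<notin> Poly_Mapping.keys m"
  shows "mpoly_eval (times_var_power i d q) a = mpoly_eval q a * a i ^ d"
proof -
  have inj: "inj_on (\<lambda>m. m + Poly_Mapping.single i d) (Poly_Mapping.keys q)"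
    by (rule inj_onI) (metis add_single_diff_single)
  have "mpoly_eval (times_var_power i d q) a = (\<Sum>mo\<in>Poly_Mapping.keys q.
      Poly_Mapping.lookup (times_var_power i d q) (mo + Poly_Mapping.single i d) *
      (\<Prod>w\<in>Poly_Mapping.keys (mo + Poly_Mapping.single i d). a w ^ Poly_Mapping.lookup (mo + Poly_Mapping.single i d) w))"
    unfolding mpoly_eval_def keys_times_var_power by (subst sum.reindex[OF inj]) simp
  also have "\<dots> = (\<Sum>mo\<in>Poly_Mapping.keys q. Poly_Mapping.lookup q mo *
      (\<Prod>w\<in>Poly_Mapping.keys mo. a w ^ Poly_Mapping.lookup mo w) * a i ^ d)"
  proof (intro sum.cong refl)
    fix mo assume mo: "mo \<in> Poly_Mapping.keys q"
    have "Poly_Mapping.lookup (times_var_power i d q) (mo + Poly_Mapping.single i d) = Poly_Mapping.lookup q mo"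
      by (simp add: lookup_times_var_power lookup_add add_single_diff_single)
    then show "Poly_Mapping.lookup (times_var_power i d q) (mo + Poly_Mapping.single i d) *
        (\<Prod>w\<in>Poly_Mapping.keys (mo + Poly_Mapping.single i d).
          a w ^ Poly_Mapping.lookup (mo + Poly_Mapping.single i d) w) =
        Poly_Mapping.lookup q mo * (\<Prod>w\<in>Poly_Mapping.keys mo. a w ^ Poly_Mapping.lookup mo w) * a i ^ d"
      using monomial_eval_add_single[OF assms[OF mo], where a=a and d=d] by (simp add: mult.assoc)
  qed
  also have "\<dots> = mpoly_eval q a * a i ^ d"
    unfolding mpoly_eval_def by (simp add: sum_distrib_right)
  finally show ?thesis .
qed

text \<open>\<open>poly_ring_seq K x i\<close> is \<open>K[x\<^sub>0, \<dots>, x\<^bsub>i-1\<^esub>]\<close>, built by adjoining one generator at a time.\<close>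
primrec poly_ring_seq :: "complex set \<Rightarrow> (nat \<Rightarrow> complex) \<Rightarrow> nat \<Rightarrow> complex set" where
  "poly_ring_seq K x 0 = K"
| "poly_ring_seq K x (Suc i) = {poly q (x i) | q. poly_over (poly_ring_seq K x i) q}"

lemma poly_ring_seq_SucI:
  "poly_over (poly_ring_seq K x i) q \<Longrightarrow> poly q (x i) \<in> poly_ring_seq K x (Suc i)"
  by auto

lemma subring_poly_ring_seq:
  assumes K: "is_subring K"
  shows "is_subring (poly_ring_seq K x i)"
proof (induction i)
  case 0
  then show ?case using K by simp
next
  case (Suc i)
  let ?S = "poly_ring_seq K x i"
  have "0 \<in> poly_ring_seq K x (Suc i)" "1 \<in> poly_ring_seq K x (Suc i)"
    using poly_ring_seq_SucI[OF poly_over_const[OF Suc subring_0[OF Suc]]]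
      poly_ring_seq_SucI[OF poly_over_const[OF Suc subring_1[OF Suc]]]
    by simp_all
  moreover have "a + b \<in> poly_ring_seq K x (Suc i) \<and> a - b \<in> poly_ring_seq K x (Suc i) \<and>
      a * b \<in> poly_ring_seq K x (Suc i)"
    if "a \<in> poly_ring_seq K x (Suc i)" "b \<in> poly_ring_seq K x (Suc i)" for a b
  proof -
    from that obtain p q where pq: "poly_over ?S p" "poly_over ?S q"
      and ab: "a = poly p (x i)" "b = poly q (x i)"
      by auto
    have "a + b = poly (p + q) (x i)" "a - b = poly (p - q) (x i)" "a * b = poly (p * q) (x i)"
      unfolding ab by simp_all
    then show ?thesis
      by (simp only:) (intro conjI poly_ring_seq_SucI poly_over_add[OF Suc pq] poly_over_diff[OF Suc pq] poly_over_mult[OF Suc pq])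
  qed
  ultimately show ?case unfolding is_subring_def by blast
qed

context
  fixes i :: nat and c :: "nat \<Rightarrow> nat mpoly_c"
  assumes c_vars: "\<And>d. vars_in {..<i} (c d)"
begin

private lemma var_not_in_keys: "m \<in> Poly_Mapping.keys (c d) \<Longrightarrow> i \<notin> Poly_Mapping.keys m"
  using c_vars[of d] unfolding vars_in_def by auto

lemma coeffs_in_sum_times_var_power:
  assumes K: "is_subring K" and "\<And>d. coeffs_in K (c d)"
  shows "coeffs_in K (\<Sum>d\<le>N. times_var_power i d (c d))"
  unfolding coeffs_in_def lookup_sum lookup_times_var_power
  using assms by (intro allI subring_sum[OF K]) (simp add: subring_0[OF K] coeffs_in_def)

lemma vars_in_sum_times_var_power: "vars_in {..<Suc i} (\<Sum>d\<le>N. times_var_power i d (c d))"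
  unfolding vars_in_def
proof
  fix mo assume "mo \<in> Poly_Mapping.keys (\<Sum>d\<le>N. times_var_power i d (c d))"
  then have "mo \<in> (\<Union>d\<in>{..N}. Poly_Mapping.keys (times_var_power i d (c d)))"
    by (rule subsetD[OF keys_sum])
  then obtain d where "mo \<in> Poly_Mapping.keys (times_var_power i d (c d))"
    by blast
  then obtain m where m: "mo = m + Poly_Mapping.single i d" "m \<in> Poly_Mapping.keys (c d)"
    unfolding keys_times_var_power by blast
  have "Poly_Mapping.keys m \<subseteq> {..<i}" using c_vars m(2) unfolding vars_in_def by blast
  then show "Poly_Mapping.keys mo \<subseteq> {..<Suc i}" unfolding m(1) keys_add_monomial by auto
qed

lemma mpoly_eval_sum_times_var_power:
  "mpoly_eval (\<Sum>d\<le>N. times_var_power i d (c d)) x = (\<Sum>d\<le>N. mpoly_eval (c d) x * x i ^ d)"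
  unfolding mpoly_eval_sum by (intro sum.cong refl mpoly_eval_times_var_power var_not_in_keys)

lemma sum_times_var_power_neq_0:
  assumes "d0 \<le> N" "c d0 \<noteq> 0"
  shows "(\<Sum>d\<le>N. times_var_power i d (c d)) \<noteq> 0"
proof -
  obtain m0 where m0: "m0 \<in> Poly_Mapping.keys (c d0)"
    using assms(2) keys_eq_empty by blast
  have m0i: "Poly_Mapping.lookup m0 i = 0" using var_not_in_keys[OF m0] by (simp add: in_keys_iff)
  let ?mo = "m0 + Poly_Mapping.single i d0"
  have "Poly_Mapping.lookup (times_var_power i d (c d)) ?mo = 0" if "d \<noteq> d0" for d
  proof (cases "d < d0")
    case True
    then have "i \<in> Poly_Mapping.keys (?mo - Poly_Mapping.single i d)"
      by (simp add: in_keys_iff lookup_minus lookup_add m0i)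
    then have "?mo - Poly_Mapping.single i d \<notin> Poly_Mapping.keys (c d)"
      using var_not_in_keys by blast
    then show ?thesis by (simp add: lookup_times_var_power in_keys_iff)
  next
    case False
    with that show ?thesis by (simp add: lookup_times_var_power lookup_add m0i)
  qed
  then have "Poly_Mapping.lookup (\<Sum>d\<le>N. times_var_power i d (c d)) ?mo =
      (\<Sum>d\<le>N. if d = d0 then Poly_Mapping.lookup (c d0) m0 else 0)"
    unfolding lookup_sum
    by (intro sum.cong refl) (simp add: lookup_times_var_power lookup_add add_single_diff_single)
  also have "\<dots> = Poly_Mapping.lookup (c d0) m0"
    using assms(1) by simp
  also have "\<dots> \<noteq> 0" using m0 by (simp add: in_keys_iff)
  finally show ?thesis by auto
qed

end

lemma poly_ring_seq_eq_mpoly_eval: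
  assumes K: "is_subring K" and e: "e \<in> poly_ring_seq K x i"
  shows "\<exists>p. coeffs_in K p \<and> vars_in {..<i} p \<and> mpoly_eval p x = e"
  using e
proof (induction i arbitrary: e)
  case 0
  then show ?case using K
    by (intro exI[of _ "Poly_Mapping.single 0 e"])
      (auto simp: coeffs_in_def vars_in_def mpoly_eval_const lookup_single when_def subring_0)
next
  case (Suc i)
  then obtain q where q: "poly_over (poly_ring_seq K x i) q" "e = poly q (x i)" by auto
  then have "\<forall>d. \<exists>p. coeffs_in K p \<and> vars_in {..<i} p \<and> mpoly_eval p x = coeff q d"
    using Suc.IH unfolding poly_over_def by blast
  then obtain c where c: "\<And>d. coeffs_in K (c d)" "\<And>d. vars_in {..<i} (c d)"
    "\<And>d. mpoly_eval (c d) x = coeff q d" by metis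
  show ?case
    by (rule exI[of _ "\<Sum>d\<le>degree q. times_var_power i d (c d)"])
      (simp add: coeffs_in_sum_times_var_power[OF c(2) K c(1)] vars_in_sum_times_var_power[OF c(2)]
        mpoly_eval_sum_times_var_power[OF c(2)] c(3) q(2) poly_altdef mult.commute)
qed

lemma common_denominator:
  assumes S: "is_subring S"
    and p: "\<And>d. \<exists>e e'. e \<in> S \<and> e' \<in> S \<and> e' \<noteq> 0 \<and> coeff p d = e / e'"
  shows "\<exists>c\<in>S. c \<noteq> 0 \<and> poly_over S (smult c p)"
proof -
  obtain e e' where e: "\<And>d. e d \<in> S" "\<And>d. e' d \<in> S" "\<And>d. e' d \<noteq> 0" "\<And>d. coeff p d = e d / e' d"
    using p by metis
  let ?c = "\<Prod>d\<le>degree p. e' d"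
  have "?c * coeff p d \<in> S" for d
  proof (cases "d \<le> degree p")
    case True
    then have "?c = e' d * (\<Prod>d'\<in>{..degree p} - {d}. e' d')"
      by (subst prod.remove[of _ d]) auto
    then have "?c * coeff p d = e d * (\<Prod>d'\<in>{..degree p} - {d}. e' d')"
      using e(3,4)[of d] by (simp add: field_simps)
    then show ?thesis using e by (simp add: subring_mult[OF S] subring_prod[OF S])
  next
    case False
    then show ?thesis by (simp add: coeff_eq_0 subring_0[OF S])
  qed
  moreover have "?c \<in> S" using e by (simp add: subring_prod[OF S])
  ultimately show ?thesis unfolding poly_over_def using e(3) by (intro bexI[of _ ?c]) auto
qed

context
  fixes K :: "complex set" and x :: "nat \<Rightarrow> complex"
  assumes K: "is_subfield K"
begin

private lemma subring_seq: "is_subring (poly_ring_seq K x i)"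
  using subring_poly_ring_seq[OF subfield_imp_subring[OF K]] .

lemma adjoin_seq_eq_quotient:
  "z \<in> adjoin_seq K x i \<Longrightarrow>
    \<exists>e e'. e \<in> poly_ring_seq K x i \<and> e' \<in> poly_ring_seq K x i \<and> e' \<noteq> 0 \<and> z = e / e'"
proof (induction i arbitrary: z)
  case 0
  then show ?case using K by (intro exI[of _ z] exI[of _ 1]) (auto simp: subfield_1)
next
  case (Suc i)
  let ?S = "poly_ring_seq K x i"
  from Suc.prems obtain p q where pq: "poly_over (adjoin_seq K x i) p" "poly_over (adjoin_seq K x i) q"
    "poly q (x i) \<noteq> 0" "z = poly p (x i) / poly q (x i)"
    unfolding adjoin_seq.simps simple_ext_def by blast
  have "\<exists>e e'. e \<in> ?S \<and> e' \<in> ?S \<and> e' \<noteq> 0 \<and> coeff p d = e / e'" for d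
    using pq(1) unfolding poly_over_def by (blast intro: Suc.IH)
  from common_denominator[OF subring_seq this]
  obtain c1 where c1: "c1 \<in> ?S" "c1 \<noteq> 0" "poly_over ?S (smult c1 p)" by blast
  have "\<exists>e e'. e \<in> ?S \<and> e' \<in> ?S \<and> e' \<noteq> 0 \<and> coeff q d = e / e'" for d
    using pq(2) unfolding poly_over_def by (blast intro: Suc.IH)
  from common_denominator[OF subring_seq this]
  obtain c2 where c2: "c2 \<in> ?S" "c2 \<noteq> 0" "poly_over ?S (smult c2 q)" by blast
  have "poly_over ?S (smult c2 (smult c1 p))" "poly_over ?S (smult c1 (smult c2 q))"
    using c1 c2 by (simp_all add: poly_over_def subring_mult[OF subring_seq] mult.assoc)
  note this[THEN poly_ring_seq_SucI]
  moreover have "poly (smult c1 (smult c2 q)) (x i) \<noteq> 0"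
    "z = poly (smult c2 (smult c1 p)) (x i) / poly (smult c1 (smult c2 q)) (x i)"
    using c1 c2 pq(3,4) by simp_all
  ultimately show ?case by blast
qed

text \<open>Clearing denominators turns a root \<open>x\<^sub>i\<close> of a polynomial over \<open>K(x\<^sub>0, \<dots>, x\<^bsub>i-1\<^esub>)\<close>
  into a polynomial relation over \<open>K\<close> among \<open>x\<^sub>0, \<dots>, x\<^sub>i\<close>.\<close>
lemma transcendental_adjoin_seq:
  assumes indep: "alg_indep K n x" and i: "i < n"
    and p: "poly_over (adjoin_seq K x i) p" "p \<noteq> 0"
  shows "poly p (x i) \<noteq> 0"
proof
  assume root: "poly p (x i) = 0"
  have "\<exists>e e'. e \<in> poly_ring_seq K x i \<and> e' \<in> poly_ring_seq K x i \<and> e' \<noteq> 0 \<and> coeff p d = e / e'" for d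
    using adjoin_seq_eq_quotient p(1) unfolding poly_over_def by blast
  from common_denominator[OF subring_seq this]
  obtain c where c: "c \<in> poly_ring_seq K x i" "c \<noteq> 0" "poly_over (poly_ring_seq K x i) (smult c p)"
    by blast
  let ?p = "smult c p"
  have "\<forall>d. \<exists>a. coeffs_in K a \<and> vars_in {..<i} a \<and> mpoly_eval a x = coeff ?p d"
    using poly_ring_seq_eq_mpoly_eval[OF subfield_imp_subring[OF K]] c(3) unfolding poly_over_def by blast
  then obtain a where a: "\<And>d. coeffs_in K (a d)" "\<And>d. vars_in {..<i} (a d)"
    "\<And>d. mpoly_eval (a d) x = coeff ?p d"
    by metis
  let ?A = "\<Sum>d\<le>degree ?p. times_var_power i d (a d)"
  have "mpoly_eval ?A x = poly ?p (x i)"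
    by (simp add: mpoly_eval_sum_times_var_power[of i a, OF a(2)] a(3) poly_altdef)
  also have "\<dots> = 0" using root by simp
  finally have "mpoly_eval ?A x = 0" .
  moreover have "a (degree ?p) \<noteq> 0"
    using c(2) p(2) a(3)[of "degree ?p"] by auto
  then have "?A \<noteq> 0"
    by (rule sum_times_var_power_neq_0[of i a, OF a(2) order_refl])
  moreover have "vars_in {..<n} ?A"
    by (rule vars_in_mono[OF vars_in_sum_times_var_power[of i a, OF a(2)]]) (use i in auto)
  ultimately show False
    using indep coeffs_in_sum_times_var_power[of i a, OF a(2) subfield_imp_subring[OF K] a(1)]
    unfolding alg_indep_def by blast
qed

lemma partial_derivation_adjoin_seq:
  assumes indep: "alg_indep K n x"
  shows "i \<le> n \<Longrightarrow> \<exists>D. is_derivation (adjoin_seq K x i) D \<and> (\<forall>c\<in>K. D c = 0) \<and>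
     (\<forall>i'<i. D (x i') = (if i' = k then 1 else 0))"
proof (induction i)
  case 0
  show ?case by (intro exI[of _ "\<lambda>_. 0"]) (simp add: is_derivation_def)
next
  case (Suc i)
  then obtain D where D: "is_derivation (adjoin_seq K x i) D" "\<forall>c\<in>K. D c = 0"
    "\<forall>i'<i. D (x i') = (if i' = k then 1 else 0)" by auto
  have "der_admissible (adjoin_seq K x i) D (x i) (if i = k then 1 else 0)"
    using transcendental_adjoin_seq[OF indep] Suc.prems
    by (intro der_admissible_transcendental[OF subfield_adjoin_seq[OF K] D(1)]) auto
  from derivation_extend_simple_ext[OF subfield_adjoin_seq[OF K] D(1) this]
  obtain D' where D': "is_derivation (adjoin_seq K x (Suc i)) D'"
    "\<forall>c\<in>adjoin_seq K x i. D' c = D c" "D' (x i) = (if i = k then 1 else 0)"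
    by auto
  have "\<forall>c\<in>K. D' c = 0" using D'(2) D(2) subset_adjoin_seq[OF K, of x i] by auto
  moreover have "\<forall>i'<Suc i. D' (x i') = (if i' = k then 1 else 0)"
    using D'(2,3) D(3) mem_adjoin_seq[OF K] by (auto simp: less_Suc_eq)
  ultimately show ?case using D'(1) by blast
qed

end

lemma partial_derivations_exist:
  fixes y :: "nat \<Rightarrow> complex"
  assumes K: "is_subfield K" and indep: "alg_indep K n x"
  shows "\<exists>G D. is_subfield G \<and> K \<subseteq> G \<and> (\<forall>i<n. x i \<in> G) \<and> (\<forall>l<m. y l \<in> G) \<and>
    (\<forall>k. is_derivation G (D k) \<and> (\<forall>c\<in>K. D k c = 0) \<and> (\<forall>i<n. D k (x i) = (if i = k then 1 else 0)))"
proof -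
  let ?F = "adjoin_seq K x n"
  let ?G = "adjoin_seq ?F y m"
  have F: "is_subfield ?F" using subfield_adjoin_seq[OF K] .
  have "\<exists>D'. is_derivation ?G D' \<and> (\<forall>c\<in>K. D' c = 0) \<and> (\<forall>i<n. D' (x i) = (if i = k then 1 else 0))"
    for k
  proof -
    obtain D where D: "is_derivation ?F D" "\<forall>c\<in>K. D c = 0" "\<forall>i<n. D (x i) = (if i = k then 1 else 0)"
      using partial_derivation_adjoin_seq[OF K indep, of n k] by auto
    obtain D' where "is_derivation ?G D'" "\<forall>c\<in>?F. D' c = D c"
      using derivation_extend_adjoin_seq[OF F D(1)] by blast
    then show ?thesis
      using D subset_adjoin_seq[OF K, of x n] mem_adjoin_seq[OF K, of _ n x] by (intro exI[of _ D']) auto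
  qed
  then obtain D where "\<forall>k. is_derivation ?G (D k) \<and> (\<forall>c\<in>K. D k c = 0) \<and>
      (\<forall>i<n. D k (x i) = (if i = k then 1 else 0))"
    by metis
  moreover have "K \<subseteq> ?G" "\<forall>i<n. x i \<in> ?G" "\<forall>l<m. y l \<in> ?G"
    using subset_adjoin_seq[OF K] subset_adjoin_seq[OF F] mem_adjoin_seq[OF K] mem_adjoin_seq[OF F]
    by blast+
  ultimately show ?thesis
    using subfield_adjoin_seq[OF F] by blast
qed

section \<open>The Jacobian argument\<close>

lemma det_eq_0_if_left_kernel:
  fixes M :: "nat \<Rightarrow> nat \<Rightarrow> complex" and g :: "nat \<Rightarrow> complex"
  assumes kernel: "\<And>k. k < m \<Longrightarrow> (\<Sum>l<m. g l * M l k) = 0" and "l0 < m" "g l0 \<noteq> 0"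
  shows "det (mat m m (\<lambda>(l, k). M l k)) = 0"
proof -
  let ?M = "mat m m (\<lambda>(l, k). M l k)"
  have "?M\<^sup>T *\<^sub>v vec m g = 0\<^sub>v m"
  proof (rule eq_vecI)
    fix k assume "k < dim_vec (0\<^sub>v m :: complex vec)"
    then have k: "k < m" by simp
    have "(?M\<^sup>T *\<^sub>v vec m g) $ k = (\<Sum>l<m. g l * M l k)"
      using k by (simp add: scalar_prod_def atLeast0LessThan mult.commute)
    then show "(?M\<^sup>T *\<^sub>v vec m g) $ k = 0\<^sub>v m $ k" using kernel k by simp
  qed simp
  moreover have "vec m g \<noteq> 0\<^sub>v m"
    using assms(2,3) by (metis index_vec index_zero_vec(1))
  ultimately have "\<exists>v. v \<in> carrier_vec m \<and> v \<noteq> 0\<^sub>v m \<and> ?M\<^sup>T *\<^sub>v v = 0\<^sub>v m"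
    using vec_carrier by blast
  then have "det ?M\<^sup>T = 0"
    by (subst det_0_iff_vec_prod_zero) auto
  then show ?thesis using det_transpose[of ?M m] by simp
qed

lemma left_kernel_trivial:
  fixes JX JY M :: "nat \<Rightarrow> nat \<Rightarrow> complex" and g :: "nat \<Rightarrow> complex"
  assumes jac: "det (mat m m (\<lambda>(j, i). JX j i)) \<noteq> 0"
    and relation: "\<And>j k. j < m \<Longrightarrow> k < m \<Longrightarrow> JX j k + (\<Sum>l<m. JY j l * M l k) = 0"
    and kernel: "\<And>k. k < m \<Longrightarrow> (\<Sum>l<m. g l * M l k) = 0"
    and "l0 < m"
  shows "g l0 = 0"
proof (rule ccontr)
  assume "g l0 \<noteq> 0"
  let ?M = "mat m m (\<lambda>(l, k). M l k)"
  let ?JY = "mat m m (\<lambda>(j, l). JY j l)"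
  have "mat m m (\<lambda>(j, i). JX j i) = - (?JY * ?M)"
  proof (rule eq_matI)
    fix j k assume "j < dim_row (- (?JY * ?M))" "k < dim_col (- (?JY * ?M))"
    then have j: "j < m" and k: "k < m" by auto
    then have "(- (?JY * ?M)) $$ (j, k) = - (\<Sum>l<m. JY j l * M l k)"
      by (simp add: scalar_prod_def atLeast0LessThan)
    then show "mat m m (\<lambda>(j, i). JX j i) $$ (j, k) = (- (?JY * ?M)) $$ (j, k)"
      using relation[OF j k] j k by (simp add: eq_neg_iff_add_eq_0)
  qed auto
  also have "det \<dots> = 0"
    unfolding det_0_negate[OF mult_carrier_mat[OF mat_carrier mat_carrier]]
      det_mult[of ?JY m ?M, OF mat_carrier mat_carrier]
    using det_eq_0_if_left_kernel[where M = M and g = g, OF kernel \<open>l0 < m\<close> \<open>g l0 \<noteq> 0\<close>] by simp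
  finally show False using jac by simp
qed

context
  fixes K :: "complex set" and m n :: nat and x y :: "nat \<Rightarrow> complex"
    and f :: "nat \<Rightarrow> (nat + nat) mpoly_c"
  assumes K: "is_subfield K"
    and f_coeffs: "\<And>j. j < m \<Longrightarrow> coeffs_in K (f j)"
    and f_vars: "\<And>j. j < m \<Longrightarrow> vars_in (Inl ` {..<n} \<union> Inr ` {..<m}) (f j)"
    and f_zero: "\<And>j. j < m \<Longrightarrow> mpoly_eval (f j) (case_sum x y) = 0"
begin

lemma jacobian_relation_of_derivation:
  assumes G: "is_subfield G" "is_derivation G D" "K \<subseteq> G" "\<forall>c\<in>K. D c = 0"
    and xy: "\<forall>i<n. x i \<in> G" "\<forall>l<m. y l \<in> G"
    and Dx: "\<forall>i<n. D (x i) = (if i = k then 1 else 0)"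
    and j: "j < m" and k: "k < n"
  shows "mpoly_eval (mpoly_pderiv (Inl k) (f j)) (case_sum x y) +
    (\<Sum>l<m. mpoly_eval (mpoly_pderiv (Inr l) (f j)) (case_sum x y) * D (y l)) = 0"
proof -
  let ?a = "case_sum x y"
  let ?df = "\<lambda>v. mpoly_eval (mpoly_pderiv v (f j)) ?a"
  have "D (mpoly_eval (f j) ?a) = (\<Sum>v\<in>Inl ` {..<n} \<union> Inr ` {..<m}. ?df v * D (?a v))"
    using G f_coeffs[OF j] f_vars[OF j] xy by (intro derivation_mpoly_eval[OF G(1,2)]) auto
  also have "\<dots> = (\<Sum>i<n. ?df (Inl i) * D (x i)) + (\<Sum>l<m. ?df (Inr l) * D (y l))"
    by (subst sum.union_disjoint) (auto simp: sum.reindex)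
  also have "(\<Sum>i<n. ?df (Inl i) * D (x i)) = (\<Sum>i<n. if i = k then ?df (Inl i) else 0)"
    using Dx by (intro sum.cong refl) auto
  also have "\<dots> = ?df (Inl k)"
    using k by simp
  finally show ?thesis
    using f_zero[OF j] derivation_0[OF G(1,2)] by simp
qed

lemma pderivs_vanish_at_relation:
  assumes indep: "alg_indep K n x"
    and jac: "det (mat m m (\<lambda>(j, i). mpoly_eval (mpoly_pderiv (Inl i) (f j)) (case_sum x y))) \<noteq> 0"
    and "m \<le> n"
    and P: "coeffs_in (field_adjoin K (x ` {m..<n})) P" "vars_in {..<m} P" "mpoly_eval P y = 0"
    and "l0 < m"
  shows "mpoly_eval (mpoly_pderiv l0 P) y = 0"
proof -
  obtain G D where G: "is_subfield G" "K \<subseteq> G" "\<forall>i<n. x i \<in> G" "\<forall>l<m. y l \<in> G"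
    and D: "\<And>k. is_derivation G (D k)" "\<And>k. \<forall>c\<in>K. D k c = 0"
      "\<And>k. \<forall>i<n. D k (x i) = (if i = k then 1 else 0)"
    using partial_derivations_exist[OF K indep, of m y] by blast
  show ?thesis
  proof (rule left_kernel_trivial[OF jac, where M = "\<lambda>l k. D k (y l)"])
    show "mpoly_eval (mpoly_pderiv (Inl k) (f j)) (case_sum x y) +
        (\<Sum>l<m. mpoly_eval (mpoly_pderiv (Inr l) (f j)) (case_sum x y) * D k (y l)) = 0"
      if "j < m" "k < m" for j k
      using jacobian_relation_of_derivation[OF G(1) D(1) G(2) D(2) G(3,4) D(3) that(1)] that \<open>m \<le> n\<close> by simp
    show "(\<Sum>l<m. mpoly_eval (mpoly_pderiv l P) y * D k (y l)) = 0" if k: "k < m" for k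
    proof -
      have "field_adjoin K (x ` {m..<n}) \<subseteq> {c \<in> G. D k c = 0}"
        using G(2,3) D(2,3)[of k] k
        by (intro field_adjoin_least subfield_derivation_constants[OF G(1) D(1)]) auto
      then have "D k (mpoly_eval P y) = (\<Sum>l<m. mpoly_eval (mpoly_pderiv l P) y * D k (y l))"
        using P G(4) by (intro derivation_mpoly_eval[OF G(1) D(1)]) auto
      then show ?thesis using P(3) derivation_0[OF G(1) D(1)] by simp
    qed
  qed (rule \<open>l0 < m\<close>)
qed

end

theorem theorem4:
  fixes K :: "complex set" and m n :: nat
    and x y :: "nat \<Rightarrow> complex"
    and f :: "nat \<Rightarrow> (nat + nat) mpoly_c"
  assumes K_field: "is_subfield K" and K_rat: "\<rat> \<subseteq> K"
    and mn: "1 \<le> m" "m < n"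
    and f_coeffs: "\<And>j. j < m \<Longrightarrow> coeffs_in K (f j)"
    and f_vars: "\<And>j. j < m \<Longrightarrow> vars_in (Inl ` {..<n} \<union> Inr ` {..<m}) (f j)"
    and f_zero: "\<And>j. j < m \<Longrightarrow> mpoly_eval (f j) (case_sum x y) = 0"
    and x_indep: "alg_indep K n x"
    and jac: "det (mat m m (\<lambda>(j, i). mpoly_eval (mpoly_pderiv (Inl i) (f j)) (case_sum x y))) \<noteq> 0"
  shows "alg_indep (field_adjoin K (x ` {m..<n})) m y"
  using pderivs_vanish_at_relation[OF K_field f_coeffs f_vars f_zero x_indep jac] mn
  by (intro alg_indep_if_pderivs_vanish[OF subfield_field_adjoin]) auto

end
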